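(* Let $M$ be a Puiseux monoid, $R$ a GCD-domain, and $F$ the field of fractions of $R$. Then an element $f \in R[M]\setminus R$ is irreducible in $R[M]$ if and only if $f$ is primitive in $R[M]$ and $f$ is irreducible in $F[M]$.
   Context: A Puiseux monoid is an additive submonoid of $(\mathbb{Q}_{\ge 0},+)$. For a commutative ring $R$ and a Puiseux monoid $M$, $R[M]$ denotes the semigroup ring of $M$ over $R$ (finite formal sums $\sum_{s\in M} f(s)X^s$ with $X^sX^t=X^{s+t}$). Every nonzero $f\in R[M]$ has a unique canonical form $f=\alpha_1X^{q_1}+\dots+\alpha_kX^{q_k}$ with all $\alpha_i\neq 0$ and $q_1>\dots>q_k$. For $R$ a GCD-domain, the content $\mathsf{c}(f)$ is the set of greatest common divisors of $\alpha_1,\dots,\alpha_k$ in $R$, and $f$ is called primitive if $\mathsf{c}(f)\subseteq R^\times$ (the units of $R$). $R[M]$ is an integral domain whose units are exactly $R^\times$ when $R$ is an integral domain. *)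

theory Defs
  imports Complex_Main "HOL-Library.Poly_Mapping" "HOL-Computational_Algebra.Fraction_Field"
begin

definition puiseux_monoid :: "rat set \<Rightarrow> bool" where
  "puiseux_monoid M \<longleftrightarrow> M \<subseteq> {q. 0 \<le> q} \<and> 0 \<in> M \<and> (\<forall>x\<in>M. \<forall>y\<in>M. x + y \<in> M)"

text \<open>The semigroup ring R[M], realised inside the monoid algebra rat =>0 'a
  (finitely supported functions with convolution product) as those elements
  whose support lies in M.\<close>
definition semigroup_ring :: "rat set \<Rightarrow> (rat \<Rightarrow>\<^sub>0 'a::comm_ring_1) set" where
  "semigroup_ring M = {f. Poly_Mapping.keys f \<subseteq> M}"

definition unit_in :: "'b::comm_ring_1 set \<Rightarrow> 'b \<Rightarrow> bool" where
  "unit_in S u \<longleftrightarrow> u \<in> S \<and> (\<exists>v\<in>S. u * v = 1)"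

definition irreducible_in :: "'b::comm_ring_1 set \<Rightarrow> 'b \<Rightarrow> bool" where
  "irreducible_in S f \<longleftrightarrow> f \<in> S \<and> f \<noteq> 0 \<and> \<not> unit_in S f \<and>
     (\<forall>a\<in>S. \<forall>b\<in>S. f = a * b \<longrightarrow> unit_in S a \<or> unit_in S b)"

definition is_gcd_of :: "'a::comm_ring_1 set \<Rightarrow> 'a \<Rightarrow> bool" where
  "is_gcd_of A d \<longleftrightarrow> (\<forall>a\<in>A. d dvd a) \<and> (\<forall>c. (\<forall>a\<in>A. c dvd a) \<longrightarrow> c dvd d)"

definition gcd_domain :: "'a::idom itself \<Rightarrow> bool" where
  "gcd_domain _ \<longleftrightarrow> (\<forall>a b::'a. \<exists>d. is_gcd_of {a, b} d)"

definition content :: "(rat \<Rightarrow>\<^sub>0 'a::comm_ring_1) \<Rightarrow> 'a set" where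
  "content f = {d. is_gcd_of (Poly_Mapping.lookup f ` Poly_Mapping.keys f) d}"

definition primitive :: "(rat \<Rightarrow>\<^sub>0 'a::comm_ring_1) \<Rightarrow> bool" where
  "primitive f \<longleftrightarrow> f \<noteq> 0 \<and> (\<forall>d\<in>content f. d dvd 1)"

definition to_frac_ring :: "(rat \<Rightarrow>\<^sub>0 'a::idom) \<Rightarrow> (rat \<Rightarrow>\<^sub>0 'a fract)" where
  "to_frac_ring f = Poly_Mapping.map (\<lambda>a. Fract a 1) f"

end

theory Submission
  imports Defs
begin

text \<open>Since exponents are nonnegative, the leading terms of two nonzero elements multiply to a
  nonzero leading term, so the units of \<open>R[M]\<close> are the units of \<open>R\<close>. Hence an irreducible
  nonconstant \<open>f\<close> is primitive, as a nonunit common divisor of its coefficients would split off.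
  Conversely, if \<open>f\<close> is primitive and \<open>f = a * b\<close> in \<open>R[M]\<close> with \<open>a\<close> a unit in \<open>F[M]\<close>, then
  \<open>a\<close> is a constant dividing every coefficient of \<open>f\<close>, hence a unit of \<open>R\<close>.
  A factorisation \<open>f = A * B\<close> in \<open>F[M]\<close> descends to \<open>R[M]\<close>: clearing denominators gives
  \<open>r s f = a' b'\<close>, and writing \<open>a' = c\<^sub>1 a''\<close>, \<open>b' = c\<^sub>2 b''\<close> with \<open>a''\<close>, \<open>b''\<close> primitive,
  Gauss's lemma makes \<open>a'' b''\<close> primitive, so \<open>r s\<close> divides \<open>c\<^sub>1 c\<^sub>2\<close> and \<open>f = (t a'') b''\<close>
  with the supports of \<open>A\<close> and \<open>B\<close>. Over a GCD domain there are no primes to reduce modulo, so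
  Gauss's lemma is proved by induction on the total number of terms, peeling off leading terms.\<close>

abbreviation scalar :: "'b::zero \<Rightarrow> rat \<Rightarrow>\<^sub>0 'b" where
  "scalar c \<equiv> Poly_Mapping.single 0 c"

lemma lookup_map:
  "f 0 = 0 \<Longrightarrow> Poly_Mapping.lookup (Poly_Mapping.map f p) k = f (Poly_Mapping.lookup p k)"
  by transfer (simp add: when_def)

lemma ex_poly_mapping_map_eq:
  assumes "\<phi> 0 = 0" "\<psi> 0 = 0" "\<And>k. \<exists>y. \<phi> y = \<psi> (Poly_Mapping.lookup F k)"
  shows "\<exists>f. Poly_Mapping.map \<phi> f = Poly_Mapping.map \<psi> F"
proof
  define h where "h x = (if x = 0 then 0 else SOME y. \<phi> y = \<psi> x)" for x
  have "\<phi> (h (Poly_Mapping.lookup F k)) = \<psi> (Poly_Mapping.lookup F k)" for k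
    using assms someI_ex[OF assms(3)[of k]] by (simp add: h_def)
  then show "Poly_Mapping.map \<phi> (Poly_Mapping.map h F) = Poly_Mapping.map \<psi> F"
    by (intro poly_mapping_eqI) (simp add: lookup_map assms h_def)
qed

lemma lookup_times_rat:
  fixes f g :: "rat \<Rightarrow>\<^sub>0 'b::comm_semiring_1"
  shows "Poly_Mapping.lookup (f * g) k =
    (\<Sum>l\<in>Poly_Mapping.keys f. Poly_Mapping.lookup f l * Poly_Mapping.lookup g (k - l))"
proof -
  have "(\<Sum>q. Poly_Mapping.lookup g q when k = l + q) = Poly_Mapping.lookup g (k - l)" for l
  proof -
    have "(\<lambda>q. Poly_Mapping.lookup g q when k = l + q) =
        (\<lambda>q. if q = k - l then Poly_Mapping.lookup g q else 0)"
      by (auto simp: when_def fun_eq_iff)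
    then show ?thesis by (simp only: Sum_any.delta)
  qed
  then have "Poly_Mapping.lookup (f * g) k =
      (\<Sum>l. Poly_Mapping.lookup f l * Poly_Mapping.lookup g (k - l))"
    by (simp add: lookup_mult)
  also have "\<dots> =
      (\<Sum>l\<in>Poly_Mapping.keys f. Poly_Mapping.lookup f l * Poly_Mapping.lookup g (k - l))"
    by (rule Sum_any.expand_superset) (auto simp: in_keys_iff)
  finally show ?thesis .
qed

lemma lookup_single_times:
  fixes h :: "rat \<Rightarrow>\<^sub>0 'b::comm_semiring_1"
  shows "Poly_Mapping.lookup (Poly_Mapping.single n a * h) k = a * Poly_Mapping.lookup h (k - n)"
  by (simp add: lookup_times_rat)

lemma lookup_scalar_times:
  fixes h :: "rat \<Rightarrow>\<^sub>0 'b::comm_semiring_1"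
  shows "Poly_Mapping.lookup (scalar c * h) k = c * Poly_Mapping.lookup h k"
  by (simp add: lookup_single_times)

lemma keys_scalar_times:
  fixes h :: "rat \<Rightarrow>\<^sub>0 'b::{comm_semiring_1,semiring_no_zero_divisors}"
  assumes "c \<noteq> 0"
  shows "Poly_Mapping.keys (scalar c * h) = Poly_Mapping.keys h"
  using assms by (auto simp: in_keys_iff lookup_scalar_times)

lemma scalar_eq_iff [simp]: "scalar a = scalar b \<longleftrightarrow> a = b"
  by (metis inj_single injD)

lemma keys_subset_0_imp_scalar:
  "Poly_Mapping.keys f \<subseteq> {0} \<Longrightarrow> f = scalar (Poly_Mapping.lookup f 0)"
  by (rule poly_mapping_eqI) (auto simp: lookup_single when_def in_keys_iff)

lemma lookup_times_Max_keys:
  fixes f g :: "rat \<Rightarrow>\<^sub>0 'b::comm_semiring_1"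
  assumes "f \<noteq> 0" "g \<noteq> 0"
  shows "Poly_Mapping.lookup (f * g) (Max (Poly_Mapping.keys f) + Max (Poly_Mapping.keys g)) =
    Poly_Mapping.lookup f (Max (Poly_Mapping.keys f)) * Poly_Mapping.lookup g (Max (Poly_Mapping.keys g))"
proof -
  let ?F = "Max (Poly_Mapping.keys f)" and ?G = "Max (Poly_Mapping.keys g)"
  have F: "?F \<in> Poly_Mapping.keys f" using assms by simp
  have "Poly_Mapping.lookup g (?F + ?G - l) = 0" if "l \<in> Poly_Mapping.keys f - {?F}" for l
  proof -
    have "l < ?F" using that by (simp add: le_neq_trans)
    then have "?F + ?G - l \<notin> Poly_Mapping.keys g" by (auto dest: Max_ge[OF finite_keys])
    then show ?thesis by (simp add: in_keys_iff)
  qed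
  then show ?thesis
    using F by (simp add: lookup_times_rat sum.remove)
qed

lemma Max_keys_times_in_keys:
  fixes f g :: "rat \<Rightarrow>\<^sub>0 'b::{comm_semiring_1,semiring_no_zero_divisors}"
  assumes "f \<noteq> 0" "g \<noteq> 0"
  shows "Max (Poly_Mapping.keys f) + Max (Poly_Mapping.keys g) \<in> Poly_Mapping.keys (f * g)"
proof -
  have "Poly_Mapping.lookup f (Max (Poly_Mapping.keys f)) \<noteq> 0"
    "Poly_Mapping.lookup g (Max (Poly_Mapping.keys g)) \<noteq> 0"
    using assms by (simp_all flip: in_keys_iff)
  then show ?thesis using assms by (simp add: lookup_times_Max_keys in_keys_iff)
qed

lemma keys_subset_0_if_times:
  fixes f g :: "rat \<Rightarrow>\<^sub>0 'b::{comm_semiring_1,semiring_no_zero_divisors}"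
  assumes "Poly_Mapping.keys f \<subseteq> {q. 0 \<le> q}" "Poly_Mapping.keys g \<subseteq> {q. 0 \<le> q}"
    and "f \<noteq> 0" "g \<noteq> 0" "Poly_Mapping.keys (f * g) \<subseteq> {0}"
  shows "Poly_Mapping.keys f \<subseteq> {0}"
proof -
  have "Max (Poly_Mapping.keys f) + Max (Poly_Mapping.keys g) = 0"
    using Max_keys_times_in_keys[OF assms(3,4)] assms(5) by auto
  moreover have "Max (Poly_Mapping.keys g) \<ge> 0"
    using assms(2,4) Max_in[OF finite_keys] by auto
  ultimately have "Max (Poly_Mapping.keys f) \<le> 0" by linarith
  show ?thesis
  proof
    fix x assume x: "x \<in> Poly_Mapping.keys f"
    have "x \<le> 0" using Max_ge[OF finite_keys x] \<open>Max (Poly_Mapping.keys f) \<le> 0\<close> by linarith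
    moreover have "0 \<le> x" using x assms(1) by blast
    ultimately show "x \<in> {0}" by simp
  qed
qed

lemma unit_in_semigroup_ring_iff:
  fixes u :: "rat \<Rightarrow>\<^sub>0 'b::idom"
  assumes "puiseux_monoid M"
  shows "unit_in (semigroup_ring M) u \<longleftrightarrow> (\<exists>c. c dvd 1 \<and> u = scalar c)"
proof
  assume "unit_in (semigroup_ring M) u"
  then obtain v where uv: "u \<in> semigroup_ring M" "v \<in> semigroup_ring M" "u * v = 1"
    by (auto simp: unit_in_def)
  have nonneg: "Poly_Mapping.keys u \<subseteq> {q. 0 \<le> q}" "Poly_Mapping.keys v \<subseteq> {q. 0 \<le> q}"
    using assms uv by (auto simp: semigroup_ring_def puiseux_monoid_def)
  have nz: "u \<noteq> 0" "v \<noteq> 0" using uv(3) by auto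
  have "Poly_Mapping.keys u \<subseteq> {0}" "Poly_Mapping.keys v \<subseteq> {0}"
    using keys_subset_0_if_times[OF nonneg nz] keys_subset_0_if_times[OF nonneg(2,1) nz(2,1)] uv(3)
    by (simp_all add: mult.commute)
  then have "u = scalar (Poly_Mapping.lookup u 0)" "v = scalar (Poly_Mapping.lookup v 0)"
    by (simp_all add: keys_subset_0_imp_scalar)
  with uv(3) have "Poly_Mapping.lookup u 0 * Poly_Mapping.lookup v 0 = 1"
    by (metis mult_single add_0 single_one scalar_eq_iff)
  with \<open>u = scalar (Poly_Mapping.lookup u 0)\<close> show "\<exists>c. c dvd 1 \<and> u = scalar c"
    by (metis dvd_triv_left)
next
  assume "\<exists>c. c dvd 1 \<and> u = scalar c"
  then obtain c w where u: "u = scalar c" and "1 = c * w" by (metis dvdE)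
  then have "u * scalar w = 1" by (simp add: mult_single)
  moreover have "0 \<in> M" using assms by (simp add: puiseux_monoid_def)
  ultimately show "unit_in (semigroup_ring M) u"
    unfolding unit_in_def semigroup_ring_def using u by (auto intro!: exI[of _ "scalar w"] split: if_splits)
qed

lemma keys_subset_0_if_unit_in:
  fixes u :: "rat \<Rightarrow>\<^sub>0 'b::idom"
  assumes "puiseux_monoid M" "unit_in (semigroup_ring M) u"
  shows "Poly_Mapping.keys u \<subseteq> {0}"
  using assms by (auto simp: unit_in_semigroup_ring_iff split: if_splits)

lemma unit_in_semigroup_ring_field_iff:
  fixes u :: "rat \<Rightarrow>\<^sub>0 'b::field"
  assumes "puiseux_monoid M"
  shows "unit_in (semigroup_ring M) u \<longleftrightarrow> u \<noteq> 0 \<and> Poly_Mapping.keys u \<subseteq> {0}"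
proof -
  have "unit_in (semigroup_ring M) u \<longleftrightarrow> (\<exists>c. c \<noteq> 0 \<and> u = scalar c)"
    by (simp add: unit_in_semigroup_ring_iff[OF assms] dvd_field_iff)
  also have "\<dots> \<longleftrightarrow> u \<noteq> 0 \<and> Poly_Mapping.keys u \<subseteq> {0}"
  proof
    assume u: "u \<noteq> 0 \<and> Poly_Mapping.keys u \<subseteq> {0}"
    then obtain c where "u = scalar c" using keys_subset_0_imp_scalar by blast
    with u show "\<exists>c. c \<noteq> 0 \<and> u = scalar c" by auto
  next
    assume "\<exists>c. c \<noteq> 0 \<and> u = scalar c"
    then obtain c where "c \<noteq> 0" "u = scalar c" by blast
    then show "u \<noteq> 0 \<and> Poly_Mapping.keys u \<subseteq> {0}" using scalar_eq_iff[of c 0] by simp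
  qed
  finally show ?thesis .
qed

lemma Fract_1_eq_iff [simp]: "Fract a 1 = Fract b (1::'a::idom) \<longleftrightarrow> a = b"
  by (simp add: eq_fract)

lemma Fract_1_eq_0_iff [simp]: "Fract a (1::'a::idom) = 0 \<longleftrightarrow> a = 0"
  by (simp add: Zero_fract_def)

lemma Fract_1_add: "Fract (a + b) (1::'a::idom) = Fract a 1 + Fract b 1"
  by simp

lemma Fract_1_sum: "Fract (sum h A) (1::'a::idom) = (\<Sum>x\<in>A. Fract (h x) 1)"
  by (induction A rule: infinite_finite_induct) (simp_all add: Zero_fract_def Fract_1_add del: add_fract)

lemma lookup_to_frac_ring: "Poly_Mapping.lookup (to_frac_ring f) k = Fract (Poly_Mapping.lookup f k) 1"
  by (simp add: to_frac_ring_def lookup_map flip: Zero_fract_def)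

lemma keys_to_frac_ring [simp]: "Poly_Mapping.keys (to_frac_ring f) = Poly_Mapping.keys f"
  by (auto simp: in_keys_iff lookup_to_frac_ring)

lemma to_frac_ring_eq_0_iff [simp]: "to_frac_ring f = 0 \<longleftrightarrow> f = 0"
  by (metis keys_eq_empty keys_to_frac_ring)

lemma to_frac_ring_in_semigroup_ring_iff [simp]:
  "to_frac_ring f \<in> semigroup_ring M \<longleftrightarrow> f \<in> semigroup_ring M"
  by (simp add: semigroup_ring_def)

lemma to_frac_ring_times:
  "to_frac_ring (f * g) = to_frac_ring f * to_frac_ring (g :: rat \<Rightarrow>\<^sub>0 'a::idom)"
  by (rule poly_mapping_eqI) (simp add: lookup_to_frac_ring lookup_times_rat Fract_1_sum)

lemma to_frac_ring_scalar [simp]: "to_frac_ring (scalar c) = scalar (Fract c 1)"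
  by (simp add: to_frac_ring_def flip: Zero_fract_def)

lemma to_frac_ring_eq_iff [simp]: "to_frac_ring f = to_frac_ring g \<longleftrightarrow> f = g"
  by (metis lookup_to_frac_ring Fract_1_eq_iff poly_mapping_eqI)

lemma clear_denominators:
  fixes A :: "rat \<Rightarrow>\<^sub>0 'a::idom fract"
  obtains r a where "r \<noteq> 0" "to_frac_ring a = scalar (Fract r 1) * A"
proof -
  have "\<forall>k. \<exists>n d. d \<noteq> 0 \<and> Poly_Mapping.lookup A k = Fract n d"
    by (metis Fract_cases)
  then obtain n d where nd: "\<And>k. d k \<noteq> 0 \<and> Poly_Mapping.lookup A k = Fract (n k) (d k)"
    by metis
  define r where "r = (\<Prod>k\<in>Poly_Mapping.keys A. d k)"
  have "r \<noteq> 0" unfolding r_def using nd by simp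
  have "\<exists>y. Fract y 1 = Fract r 1 * Poly_Mapping.lookup A k" for k
  proof (cases "k \<in> Poly_Mapping.keys A")
    case True
    then have "r = d k * (\<Prod>j\<in>Poly_Mapping.keys A - {k}. d j)"
      unfolding r_def by (simp add: prod.remove)
    then have "Fract r 1 * Poly_Mapping.lookup A k =
        Fract (n k * (\<Prod>j\<in>Poly_Mapping.keys A - {k}. d j)) 1"
      using nd[of k] by (simp add: eq_fract algebra_simps)
    then show ?thesis by metis
  qed (auto simp: in_keys_iff Zero_fract_def)
  then obtain a where "Poly_Mapping.map (\<lambda>a. Fract a 1) a = Poly_Mapping.map ((*) (Fract r 1)) A"
    using ex_poly_mapping_map_eq[of "\<lambda>a. Fract a 1" "(*) (Fract r 1)" A]
    by (auto simp flip: Zero_fract_def)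
  then have "to_frac_ring a = scalar (Fract r 1) * A"
    by (simp add: to_frac_ring_def mult_map_scale_conv_mult)
  with \<open>r \<noteq> 0\<close> show thesis by (rule that)
qed

lemma gcd_domain_ex_is_gcd_of:
  fixes A :: "'a::idom set"
  assumes "gcd_domain TYPE('a)" "finite A"
  shows "\<exists>d. is_gcd_of A d"
  using assms(2)
proof (induction A rule: finite_induct)
  case empty
  then show ?case by (auto simp: is_gcd_of_def)
next
  case (insert a A)
  then obtain d where d: "is_gcd_of A d" by blast
  obtain e where e: "is_gcd_of {a, d} e" using assms(1) unfolding gcd_domain_def by blast
  have "is_gcd_of (insert a A) e"
    unfolding is_gcd_of_def
  proof (intro conjI allI impI ballI)
    fix x assume "x \<in> insert a A"
    then show "e dvd x"
      using d e unfolding is_gcd_of_def by (metis dvd_trans insert_iff)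
  next
    fix c assume c: "\<forall>x\<in>insert a A. c dvd x"
    then have "c dvd d" using d by (simp add: is_gcd_of_def)
    with c show "c dvd e" using e by (simp add: is_gcd_of_def)
  qed
  then show ?case by blast
qed

lemma is_gcd_of_mult:
  fixes A :: "'a::idom set"
  assumes G: "gcd_domain TYPE('a)" and "finite A" and d: "is_gcd_of A d"
  shows "is_gcd_of ((*) c ` A) (c * d)"
proof (cases "c = 0")
  case True
  then show ?thesis by (auto simp: is_gcd_of_def)
next
  case False
  obtain g where g: "is_gcd_of ((*) c ` A) g"
    using gcd_domain_ex_is_gcd_of[OF G] \<open>finite A\<close> by blast
  have "c dvd g" using g unfolding is_gcd_of_def by auto
  then obtain g' where g': "g = c * g'" by (metis dvdE)
  have "g' dvd a" if "a \<in> A" for a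
    using g that False unfolding is_gcd_of_def g' by auto
  then have "g dvd c * d" using d unfolding is_gcd_of_def g' by auto
  show ?thesis
    unfolding is_gcd_of_def
  proof (intro conjI allI impI)
    show "\<forall>a\<in>(*) c ` A. c * d dvd a" using d unfolding is_gcd_of_def by auto
  next
    fix x assume "\<forall>a\<in>(*) c ` A. x dvd a"
    then have "x dvd g" using g unfolding is_gcd_of_def by blast
    then show "x dvd c * d" using \<open>g dvd c * d\<close> by (rule dvd_trans)
  qed
qed

lemma dvd_mult_unit_cancel:
  fixes g :: "'b::comm_semiring_1"
  assumes "g dvd 1" "e dvd y * g"
  shows "e dvd y"
proof -
  obtain w where "1 = g * w" using assms(1) by (metis dvdE)
  then have "y * g * w = y" by (simp add: mult.assoc)
  with dvd_mult2[OF assms(2), of w] show ?thesis by simp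
qed

lemma gcd_domain_dvd_mult_cancel:
  fixes e :: "'a::idom"
  assumes G: "gcd_domain TYPE('a)"
    and coprime: "\<And>x. x dvd e \<Longrightarrow> x dvd c \<Longrightarrow> x dvd 1" and "e dvd c * y"
  shows "e dvd y"
proof -
  obtain g where g: "is_gcd_of {e, c} g" using G unfolding gcd_domain_def by blast
  have "g dvd 1" using g coprime unfolding is_gcd_of_def by auto
  have "is_gcd_of ((*) y ` {e, c}) (y * g)" by (rule is_gcd_of_mult[OF G _ g]) simp
  moreover have "\<forall>a\<in>(*) y ` {e, c}. e dvd a" using \<open>e dvd c * y\<close> by (auto simp: mult.commute)
  ultimately have "e dvd y * g" unfolding is_gcd_of_def by blast
  with \<open>g dvd 1\<close> show ?thesis by (rule dvd_mult_unit_cancel)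
qed

definition dvd_coeffs :: "'b::comm_semiring_1 \<Rightarrow> (rat \<Rightarrow>\<^sub>0 'b) \<Rightarrow> bool" where
  "dvd_coeffs d f \<longleftrightarrow> (\<forall>k. d dvd Poly_Mapping.lookup f k)"

definition coprime_coeffs :: "(rat \<Rightarrow>\<^sub>0 'b::comm_semiring_1) \<Rightarrow> bool" where
  "coprime_coeffs f \<longleftrightarrow> (\<forall>d. dvd_coeffs d f \<longrightarrow> d dvd 1)"

lemma coprime_coeffs_nonzero: "coprime_coeffs (f :: rat \<Rightarrow>\<^sub>0 'a::idom) \<Longrightarrow> f \<noteq> 0"
  by (auto simp: coprime_coeffs_def dvd_coeffs_def dest: spec[of _ 0])

lemma dvd_coeffs_scalar_times: "dvd_coeffs c (scalar c * f)"
  by (simp add: dvd_coeffs_def lookup_scalar_times)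

lemma dvd_coeffs_imp_scalar_factor:
  assumes "dvd_coeffs c f"
  obtains g where "f = scalar c * g"
proof -
  have "\<exists>y. c * y = Poly_Mapping.lookup f k" for k
    using assms unfolding dvd_coeffs_def by (metis dvdE)
  then obtain g where "Poly_Mapping.map ((*) c) g = Poly_Mapping.map (\<lambda>x. x) f"
    using ex_poly_mapping_map_eq[of "(*) c" "\<lambda>x. x" f] by auto
  moreover have "Poly_Mapping.map (\<lambda>x. x) f = f"
    by (rule poly_mapping_eqI) (simp add: lookup_map)
  ultimately show thesis by (metis that mult_map_scale_conv_mult)
qed

lemma is_gcd_of_coeffs_imp_dvd_coeffs:
  assumes "is_gcd_of (Poly_Mapping.lookup f ` Poly_Mapping.keys f) d"
  shows "dvd_coeffs d f"
  unfolding dvd_coeffs_def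
proof
  fix k
  show "d dvd Poly_Mapping.lookup f k"
  proof (cases "k \<in> Poly_Mapping.keys f")
    case True
    then show ?thesis using assms by (simp add: is_gcd_of_def)
  qed (simp add: in_keys_iff)
qed

lemma ex_is_gcd_of_coeffs:
  fixes f :: "rat \<Rightarrow>\<^sub>0 'a::idom"
  assumes "gcd_domain TYPE('a)"
  obtains d where "is_gcd_of (Poly_Mapping.lookup f ` Poly_Mapping.keys f) d"
  using gcd_domain_ex_is_gcd_of[OF assms finite_imageI[OF finite_keys]] by blast

lemma primitive_iff_coprime_coeffs:
  fixes f :: "rat \<Rightarrow>\<^sub>0 'a::idom"
  assumes G: "gcd_domain TYPE('a)"
  shows "primitive f \<longleftrightarrow> coprime_coeffs f"
proof -
  obtain d where d: "is_gcd_of (Poly_Mapping.lookup f ` Poly_Mapping.keys f) d"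
    using ex_is_gcd_of_coeffs[OF G] .
  have "dvd_coeffs e f \<longleftrightarrow> e dvd d" for e
  proof
    assume "dvd_coeffs e f"
    then show "e dvd d" using d by (simp add: dvd_coeffs_def is_gcd_of_def)
  next
    assume "e dvd d"
    then show "dvd_coeffs e f"
      using is_gcd_of_coeffs_imp_dvd_coeffs[OF d] by (meson dvd_coeffs_def dvd_trans)
  qed
  then have "coprime_coeffs f \<longleftrightarrow> d dvd 1"
    unfolding coprime_coeffs_def by (meson dvd_refl dvd_trans)
  moreover have "e dvd d" if "e \<in> content f" for e
    using d that by (simp add: content_def is_gcd_of_def)
  moreover have "d \<in> content f" using d by (simp add: content_def)
  ultimately show ?thesis
    unfolding primitive_def using coprime_coeffs_nonzero by (meson dvd_trans)
qed

lemma content_decomposition: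
  fixes f :: "rat \<Rightarrow>\<^sub>0 'a::idom"
  assumes G: "gcd_domain TYPE('a)" and "f \<noteq> 0"
  obtains c g where "c \<noteq> 0" "f = scalar c * g" "coprime_coeffs g"
proof -
  obtain d where d: "is_gcd_of (Poly_Mapping.lookup f ` Poly_Mapping.keys f) d"
    using ex_is_gcd_of_coeffs[OF G] .
  obtain g where f: "f = scalar d * g"
    using is_gcd_of_coeffs_imp_dvd_coeffs[OF d] by (rule dvd_coeffs_imp_scalar_factor)
  have "d \<noteq> 0" using f \<open>f \<noteq> 0\<close> by auto
  have "coprime_coeffs g" unfolding coprime_coeffs_def
  proof (intro allI impI)
    fix e assume "dvd_coeffs e g"
    then have "\<forall>a\<in>Poly_Mapping.lookup f ` Poly_Mapping.keys f. d * e dvd a"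
      by (auto simp: f dvd_coeffs_def lookup_scalar_times)
    then have "d * e dvd d * 1" using d by (simp add: is_gcd_of_def)
    then show "e dvd 1" using \<open>d \<noteq> 0\<close> by (simp only: dvd_mult_cancel_left) simp
  qed
  with \<open>d \<noteq> 0\<close> f show thesis by (rule that)
qed

lemma dvd_coeffs_scalar_times_coprime:
  fixes p :: "rat \<Rightarrow>\<^sub>0 'a::idom"
  assumes G: "gcd_domain TYPE('a)" and "coprime_coeffs p" and "dvd_coeffs d (scalar c * p)"
  shows "d dvd c"
proof -
  obtain t where t: "is_gcd_of (Poly_Mapping.lookup p ` Poly_Mapping.keys p) t"
    using ex_is_gcd_of_coeffs[OF G] .
  have "t dvd 1"
    using assms(2) is_gcd_of_coeffs_imp_dvd_coeffs[OF t] by (simp add: coprime_coeffs_def)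
  have "is_gcd_of ((*) c ` Poly_Mapping.lookup p ` Poly_Mapping.keys p) (c * t)"
    by (rule is_gcd_of_mult[OF G _ t]) simp
  moreover have "\<forall>a\<in>(*) c ` Poly_Mapping.lookup p ` Poly_Mapping.keys p. d dvd a"
    using assms(3) by (auto simp: dvd_coeffs_def lookup_scalar_times)
  ultimately have "d dvd c * t" by (simp add: is_gcd_of_def)
  with \<open>t dvd 1\<close> show ?thesis by (rule dvd_mult_unit_cancel)
qed

lemma dvd_coeffs_times_diff_single:
  fixes g h :: "rat \<Rightarrow>\<^sub>0 'b::comm_ring_1"
  assumes "dvd_coeffs x (g * h)" "x dvd a"
  shows "dvd_coeffs x ((g - Poly_Mapping.single n a) * h)"
  unfolding dvd_coeffs_def
proof
  fix k
  have "(g - Poly_Mapping.single n a) * h = g * h - Poly_Mapping.single n a * h"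
    by (simp add: algebra_simps)
  then have "Poly_Mapping.lookup ((g - Poly_Mapping.single n a) * h) k =
      Poly_Mapping.lookup (g * h) k - a * Poly_Mapping.lookup h (k - n)"
    by (simp add: lookup_minus lookup_single_times)
  then show "x dvd Poly_Mapping.lookup ((g - Poly_Mapping.single n a) * h) k"
    using assms by (simp add: dvd_coeffs_def)
qed

lemma dvd_coeffs_single_times_unit:
  fixes h :: "rat \<Rightarrow>\<^sub>0 'b::comm_semiring_1"
  assumes "a dvd 1" "dvd_coeffs x (Poly_Mapping.single n a * h)"
  shows "dvd_coeffs x h"
proof -
  have "Poly_Mapping.lookup (Poly_Mapping.single n a * h) (k + n) = a * Poly_Mapping.lookup h k" for k
    by (simp add: lookup_single_times)
  then show ?thesis
    using assms(2) dvd_mult_unit_cancel[OF assms(1)] by (metis dvd_coeffs_def mult.commute)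
qed

lemma gcd_domain_dvd_coeffs_scalar_times_cancel:
  fixes p :: "rat \<Rightarrow>\<^sub>0 'a::idom"
  assumes G: "gcd_domain TYPE('a)"
    and coprime: "\<And>y. y dvd x \<Longrightarrow> y dvd c \<Longrightarrow> y dvd 1" and "dvd_coeffs x (scalar c * p)"
  shows "dvd_coeffs x p"
  unfolding dvd_coeffs_def
proof
  fix k
  have "x dvd c * Poly_Mapping.lookup p k"
    using assms(3) by (simp add: dvd_coeffs_def lookup_scalar_times)
  then show "x dvd Poly_Mapping.lookup p k"
    using gcd_domain_dvd_mult_cancel[OF G coprime] by blast
qed

text \<open>The inductive step of Gauss's lemma: a common divisor of the coefficients of \<open>g * h\<close>
  that also divides the leading coefficient of \<open>g\<close> divides those of \<open>g' * h\<close>, where \<open>c * g'\<close>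
  is \<open>g\<close> with its leading term removed, and it is coprime to \<open>c\<close>.\<close>
lemma coprime_coeffs_times_step:
  fixes g h :: "rat \<Rightarrow>\<^sub>0 'a::idom"
  assumes G: "gcd_domain TYPE('a)"
    and IH: "\<And>g'. card (Poly_Mapping.keys g') < card (Poly_Mapping.keys g) \<Longrightarrow>
      coprime_coeffs g' \<Longrightarrow> coprime_coeffs (g' * h)"
    and g: "coprime_coeffs g" and h: "coprime_coeffs h"
    and x: "dvd_coeffs x (g * h)" "x dvd Poly_Mapping.lookup g (Max (Poly_Mapping.keys g))"
  shows "x dvd 1"
proof -
  define n where "n = Max (Poly_Mapping.keys g)"
  define a where "a = Poly_Mapping.lookup g n"
  define g1 where "g1 = g - Poly_Mapping.single n a"
  have n: "n \<in> Poly_Mapping.keys g" using coprime_coeffs_nonzero[OF g] by (simp add: n_def)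
  have lookup_g1: "Poly_Mapping.lookup g1 k = (if k = n then 0 else Poly_Mapping.lookup g k)" for k
    by (simp add: g1_def a_def lookup_minus lookup_single when_def)
  have keys_g1: "Poly_Mapping.keys g1 = Poly_Mapping.keys g - {n}"
    by (auto simp: in_keys_iff lookup_g1 split: if_splits)
  have "x dvd a" using x(2) by (simp add: a_def n_def)
  with x(1) have x_g1: "dvd_coeffs x (g1 * h)"
    unfolding g1_def by (rule dvd_coeffs_times_diff_single)
  show ?thesis
  proof (cases "g1 = 0")
    case True
    then have "dvd_coeffs a g"
      using lookup_g1 by (simp add: dvd_coeffs_def a_def) (metis dvd_0_right dvd_refl)
    then have "a dvd 1" using g by (simp add: coprime_coeffs_def)
    moreover have "dvd_coeffs x (Poly_Mapping.single n a * h)"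
      using True x(1) by (simp add: g1_def)
    ultimately have "dvd_coeffs x h" by (rule dvd_coeffs_single_times_unit)
    then show ?thesis using h by (simp add: coprime_coeffs_def)
  next
    case False
    obtain c g' where c: "c \<noteq> 0" "g1 = scalar c * g'" and "coprime_coeffs g'"
      using content_decomposition[OF G False] by blast
    have "Poly_Mapping.keys g' = Poly_Mapping.keys g - {n}"
      using c keys_g1 by (simp add: keys_scalar_times)
    then have "card (Poly_Mapping.keys g') < card (Poly_Mapping.keys g)"
      using card_Diff1_less[OF finite_keys n] by simp
    then have "coprime_coeffs (g' * h)" using \<open>coprime_coeffs g'\<close> by (rule IH)
    have "y dvd 1" if "y dvd x" "y dvd c" for y
    proof -
      have "y dvd Poly_Mapping.lookup g k" for k
        using dvd_trans[OF that(1) \<open>x dvd a\<close>] that(2) lookup_g1[of k]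
        by (cases "k = n") (simp_all add: c lookup_scalar_times a_def, metis dvd_mult2)
      then show ?thesis using g by (simp add: coprime_coeffs_def dvd_coeffs_def)
    qed
    moreover have "dvd_coeffs x (scalar c * (g' * h))" using x_g1 by (simp add: c mult.assoc)
    ultimately have "dvd_coeffs x (g' * h)" by (rule gcd_domain_dvd_coeffs_scalar_times_cancel[OF G])
    then show ?thesis using \<open>coprime_coeffs (g' * h)\<close> by (simp add: coprime_coeffs_def)
  qed
qed

theorem coprime_coeffs_times:
  fixes g h :: "rat \<Rightarrow>\<^sub>0 'a::idom"
  assumes G: "gcd_domain TYPE('a)"
  shows "coprime_coeffs g \<Longrightarrow> coprime_coeffs h \<Longrightarrow> coprime_coeffs (g * h)"
proof (induction "card (Poly_Mapping.keys g) + card (Poly_Mapping.keys h)" arbitrary: g h rule: less_induct)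
  case less
  have IH_g: "coprime_coeffs (g' * h)"
    if "card (Poly_Mapping.keys g') < card (Poly_Mapping.keys g)" "coprime_coeffs g'" for g'
    using less.hyps[of g' h] less.prems(2) that by simp
  have IH_h: "coprime_coeffs (h' * g)"
    if "card (Poly_Mapping.keys h') < card (Poly_Mapping.keys h)" "coprime_coeffs h'" for h'
    using less.hyps[of h' g] less.prems(1) that by simp
  show ?case unfolding coprime_coeffs_def
  proof (intro allI impI)
    fix d assume d: "dvd_coeffs d (g * h)"
    let ?a = "Poly_Mapping.lookup g (Max (Poly_Mapping.keys g))"
    let ?b = "Poly_Mapping.lookup h (Max (Poly_Mapping.keys h))"
    have "d dvd ?b"
    proof (rule gcd_domain_dvd_mult_cancel[OF G])
      have "Poly_Mapping.lookup (g * h) (Max (Poly_Mapping.keys g) + Max (Poly_Mapping.keys h)) =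
          ?a * ?b"
        using less.prems by (simp add: coprime_coeffs_nonzero lookup_times_Max_keys)
      then show "d dvd ?a * ?b" using d by (metis dvd_coeffs_def)
      fix y assume "y dvd d" "y dvd ?a"
      moreover from \<open>y dvd d\<close> d have "dvd_coeffs y (g * h)"
        by (meson dvd_coeffs_def dvd_trans)
      ultimately show "y dvd 1"
        by (intro coprime_coeffs_times_step[OF G IH_g less.prems])
    qed
    moreover have "dvd_coeffs d (h * g)" using d by (simp add: mult.commute)
    ultimately show "d dvd 1"
      by (intro coprime_coeffs_times_step[OF G IH_h less.prems(2,1)])
  qed
qed

lemma to_frac_ring_factorization_descends:
  fixes f :: "rat \<Rightarrow>\<^sub>0 'a::idom"
  assumes G: "gcd_domain TYPE('a)" and "f \<noteq> 0" and AB: "to_frac_ring f = A * B"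
  obtains a b where "f = a * b" "Poly_Mapping.keys a = Poly_Mapping.keys A"
    "Poly_Mapping.keys b = Poly_Mapping.keys B"
proof -
  obtain r a' where r: "r \<noteq> 0" "to_frac_ring a' = scalar (Fract r 1) * A"
    by (rule clear_denominators)
  obtain s b' where s: "s \<noteq> 0" "to_frac_ring b' = scalar (Fract s 1) * B"
    by (rule clear_denominators)
  have keys_a': "Poly_Mapping.keys a' = Poly_Mapping.keys A"
    using keys_to_frac_ring[of a'] by (simp add: r keys_scalar_times)
  have keys_b': "Poly_Mapping.keys b' = Poly_Mapping.keys B"
    using keys_to_frac_ring[of b'] by (simp add: s keys_scalar_times)
  have "to_frac_ring (scalar (r * s) * f) = to_frac_ring (a' * b')"
    by (simp add: to_frac_ring_times r s AB mult_single mult_ac)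
  then have rs: "scalar (r * s) * f = a' * b'" by simp
  have "A \<noteq> 0" "B \<noteq> 0" using AB \<open>f \<noteq> 0\<close> by auto
  then have "a' \<noteq> 0" "b' \<noteq> 0"
    using keys_a' keys_b' by (metis keys_eq_empty)+
  obtain c1 a'' where a'': "c1 \<noteq> 0" "a' = scalar c1 * a''" "coprime_coeffs a''"
    using content_decomposition[OF G \<open>a' \<noteq> 0\<close>] by blast
  obtain c2 b'' where b'': "c2 \<noteq> 0" "b' = scalar c2 * b''" "coprime_coeffs b''"
    using content_decomposition[OF G \<open>b' \<noteq> 0\<close>] by blast
  have prod: "a' * b' = scalar (c1 * c2) * (a'' * b'')"
    by (simp add: a'' b'' mult_single mult_ac)
  have "coprime_coeffs (a'' * b'')" using a''(3) b''(3) by (rule coprime_coeffs_times[OF G])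
  moreover have "dvd_coeffs (r * s) (scalar (c1 * c2) * (a'' * b''))"
    using dvd_coeffs_scalar_times[of "r * s" f] by (simp add: rs prod)
  ultimately have "r * s dvd c1 * c2" by (rule dvd_coeffs_scalar_times_coprime[OF G])
  then obtain t where t: "c1 * c2 = r * s * t" by (metis dvdE)
  have "scalar (r * s) * f = scalar (r * s * t) * (a'' * b'')"
    by (simp add: rs prod t)
  also have "\<dots> = scalar (r * s) * ((scalar t * a'') * b'')"
    by (simp add: mult_single flip: mult.assoc)
  finally have "scalar (r * s) * f = scalar (r * s) * ((scalar t * a'') * b'')" .
  then have f: "f = (scalar t * a'') * b''" using r(1) s(1) scalar_eq_iff[of "r * s" 0] by simp
  then have "t \<noteq> 0" using \<open>f \<noteq> 0\<close> by auto
  show thesis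
  proof (rule that[OF f])
    show "Poly_Mapping.keys (scalar t * a'') = Poly_Mapping.keys A"
      using \<open>t \<noteq> 0\<close> a'' keys_a' by (simp add: keys_scalar_times)
    show "Poly_Mapping.keys b'' = Poly_Mapping.keys B"
      using b'' keys_b' by (simp add: keys_scalar_times)
  qed
qed

lemma coprime_coeffs_if_irreducible_in:
  fixes f :: "rat \<Rightarrow>\<^sub>0 'a::idom"
  assumes M: "puiseux_monoid M" and irr: "irreducible_in (semigroup_ring M) f"
    and nonconst: "\<not> Poly_Mapping.keys f \<subseteq> {0}"
  shows "coprime_coeffs f"
  unfolding coprime_coeffs_def
proof (intro allI impI)
  fix d assume "dvd_coeffs d f"
  then obtain g where f: "f = scalar d * g" by (rule dvd_coeffs_imp_scalar_factor)
  have "d \<noteq> 0" using f irr by (auto simp: irreducible_in_def)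
  then have "Poly_Mapping.keys g = Poly_Mapping.keys f" by (simp add: f keys_scalar_times)
  then have "g \<in> semigroup_ring M" "\<not> unit_in (semigroup_ring M) g"
    using irr nonconst keys_subset_0_if_unit_in[OF M, of g]
    by (auto simp: irreducible_in_def semigroup_ring_def)
  moreover have "scalar d \<in> semigroup_ring M"
    using M by (simp add: semigroup_ring_def puiseux_monoid_def)
  ultimately have "unit_in (semigroup_ring M) (scalar d)"
    using irr f by (auto simp: irreducible_in_def)
  then show "d dvd 1" by (simp add: unit_in_semigroup_ring_iff[OF M])
qed

lemma irreducible_in_frac_ring_if_irreducible_in:
  fixes f :: "rat \<Rightarrow>\<^sub>0 'a::idom"
  assumes M: "puiseux_monoid M" and G: "gcd_domain TYPE('a)"
    and irr: "irreducible_in (semigroup_ring M) f" and nonconst: "\<not> Poly_Mapping.keys f \<subseteq> {0}"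
  shows "irreducible_in (semigroup_ring M) (to_frac_ring f)"
  unfolding irreducible_in_def
proof (intro conjI ballI impI)
  show "to_frac_ring f \<in> semigroup_ring M" using irr by (simp add: irreducible_in_def)
  show "to_frac_ring f \<noteq> 0" "\<not> unit_in (semigroup_ring M) (to_frac_ring f)"
    using nonconst by (auto simp: unit_in_semigroup_ring_field_iff[OF M])
  fix A B assume A: "A \<in> semigroup_ring M" and B: "B \<in> semigroup_ring M"
    and AB: "to_frac_ring f = A * B"
  show "unit_in (semigroup_ring M) A \<or> unit_in (semigroup_ring M) B"
  proof (rule ccontr)
    assume "\<not> ?thesis"
    moreover have "A \<noteq> 0" "B \<noteq> 0" using AB \<open>to_frac_ring f \<noteq> 0\<close> by auto
    ultimately have nonconst_AB: "\<not> Poly_Mapping.keys A \<subseteq> {0}" "\<not> Poly_Mapping.keys B \<subseteq> {0}"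
      by (auto simp: unit_in_semigroup_ring_field_iff[OF M])
    have "f \<noteq> 0" using nonconst by auto
    then obtain a b where ab: "f = a * b" "Poly_Mapping.keys a = Poly_Mapping.keys A"
      "Poly_Mapping.keys b = Poly_Mapping.keys B"
      using to_frac_ring_factorization_descends[OF G _ AB] by blast
    then have "a \<in> semigroup_ring M" "b \<in> semigroup_ring M"
      using A B by (simp_all add: semigroup_ring_def)
    then have "unit_in (semigroup_ring M) a \<or> unit_in (semigroup_ring M) b"
      using irr ab(1) by (simp add: irreducible_in_def)
    then show False
      using keys_subset_0_if_unit_in[OF M, of a] keys_subset_0_if_unit_in[OF M, of b]
        nonconst_AB ab(2,3) by argo
  qed
qed

lemma unit_in_if_constant_factor_of_coprime:
  fixes f :: "rat \<Rightarrow>\<^sub>0 'a::idom"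
  assumes M: "puiseux_monoid M" and "coprime_coeffs f" and "f = a * b"
    and "Poly_Mapping.keys a \<subseteq> {0}"
  shows "unit_in (semigroup_ring M) a"
proof -
  obtain c where a: "a = scalar c" using assms(4) keys_subset_0_imp_scalar by blast
  then have "dvd_coeffs c f" using dvd_coeffs_scalar_times assms(3) by metis
  then have "c dvd 1" using assms(2) by (simp add: coprime_coeffs_def)
  with a show ?thesis by (auto simp: unit_in_semigroup_ring_iff[OF M])
qed

lemma irreducible_in_if_irreducible_in_frac_ring:
  fixes f :: "rat \<Rightarrow>\<^sub>0 'a::idom"
  assumes M: "puiseux_monoid M" and "coprime_coeffs f" and "f \<in> semigroup_ring M"
    and nonconst: "\<not> Poly_Mapping.keys f \<subseteq> {0}"
    and irr: "irreducible_in (semigroup_ring M) (to_frac_ring f)"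
  shows "irreducible_in (semigroup_ring M) f"
  unfolding irreducible_in_def
proof (intro conjI ballI impI)
  show "f \<in> semigroup_ring M" by fact
  show "f \<noteq> 0" "\<not> unit_in (semigroup_ring M) f"
    using nonconst keys_subset_0_if_unit_in[OF M] by auto
  fix a b assume "a \<in> semigroup_ring M" "b \<in> semigroup_ring M" and f: "f = a * b"
  then have "unit_in (semigroup_ring M) (to_frac_ring a) \<or> unit_in (semigroup_ring M) (to_frac_ring b)"
    using irr by (simp add: irreducible_in_def to_frac_ring_times)
  then show "unit_in (semigroup_ring M) a \<or> unit_in (semigroup_ring M) b"
  proof
    assume "unit_in (semigroup_ring M) (to_frac_ring a)"
    then have "Poly_Mapping.keys a \<subseteq> {0}" using keys_subset_0_if_unit_in[OF M] by fastforce
    with f have "unit_in (semigroup_ring M) a"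
      by (rule unit_in_if_constant_factor_of_coprime[OF M \<open>coprime_coeffs f\<close>])
    then show ?thesis ..
  next
    assume "unit_in (semigroup_ring M) (to_frac_ring b)"
    then have "Poly_Mapping.keys b \<subseteq> {0}" using keys_subset_0_if_unit_in[OF M] by fastforce
    moreover have "f = b * a" using f by (simp add: mult.commute)
    ultimately have "unit_in (semigroup_ring M) b"
      using unit_in_if_constant_factor_of_coprime[OF M \<open>coprime_coeffs f\<close>] by blast
    then show ?thesis ..
  qed
qed

theorem mainTheorem2:
  fixes M :: "rat set" and f :: "rat \<Rightarrow>\<^sub>0 'a::idom"
  assumes "puiseux_monoid M"
    and "gcd_domain TYPE('a)"
    and "f \<in> semigroup_ring M"
    and "\<not> Poly_Mapping.keys f \<subseteq> {0}"
  shows "irreducible_in (semigroup_ring M) f \<longleftrightarrow>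
           primitive f \<and> irreducible_in (semigroup_ring M :: (rat \<Rightarrow>\<^sub>0 'a fract) set) (to_frac_ring f)"
proof
  assume "irreducible_in (semigroup_ring M) f"
  then show "primitive f \<and> irreducible_in (semigroup_ring M) (to_frac_ring f)"
    using coprime_coeffs_if_irreducible_in[OF assms(1) _ assms(4)]
      irreducible_in_frac_ring_if_irreducible_in[OF assms(1,2) _ assms(4)]
    by (simp add: primitive_iff_coprime_coeffs[OF assms(2)])
next
  assume "primitive f \<and> irreducible_in (semigroup_ring M) (to_frac_ring f)"
  then show "irreducible_in (semigroup_ring M) f"
    using irreducible_in_if_irreducible_in_frac_ring[OF assms(1) _ assms(3,4)]
    by (simp add: primitive_iff_coprime_coeffs[OF assms(2)])
qed

end
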